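(* Let $A\subseteq\mathbb{N}$ be a sum-dominant set with $|A|=6$. If there exist distinct $m_1, m_2, m_3\in A$ such that $m_2-m_1 = m_3-m_2$, then $A-A$ contains at most $7$ distinct positive elements.
   Context: For a finite set $A\subseteq\mathbb{N}$, the sum set is $A+A=\{a_i+a_j : a_i,a_j\in A\}$ and the difference set is $A-A=\{a_i-a_j : a_i,a_j\in A\}$. The set $A$ is called sum-dominant if $|A+A|>|A-A|$. *)

theory Defs
  imports Main
begin

definition sumset :: "nat set \<Rightarrow> nat set" where
  "sumset A = {a + b | a b. a \<in> A \<and> b \<in> A}"

definition diffset :: "nat set \<Rightarrow> int set" where
  "diffset A = {int a - int b | a b. a \<in> A \<and> b \<in> A}"

definition sum_dominant :: "nat set \<Rightarrow> bool" where
  "sum_dominant A \<longleftrightarrow> finite A \<and> card (sumset A) > card (diffset A)"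

end

theory Submission
  imports Defs
begin

(* Suppose A - A had at least 8 positive elements. Then at most 7 of the 15 differences y - x
   (x < y in A) are repeats, while |A + A| > |A - A| \<ge> 17 leaves at most 3 repeats among the
   21 sums x + y (x \<le> y). Every repeated difference b - a = d - c is a repeated sum
   a + d = b + c, and counting ordered collisions this way, noting that the collisions
   x + z = y + y coming from a 3-term progression (x, y, z) are not hit, shows that some sum
   has three representations while A contains at most one 3-term progression. But a sum v with
   three representations either has v/2 in A, which is then the middle of two progressions, or
   pairs off all six elements of A, so that A is symmetric about v/2 and the given progression
   and its mirror image are two different ones. *)

definition collisions :: "('a \<Rightarrow> 'b) \<Rightarrow> 'a set \<Rightarrow> ('a \<times> 'a) set" where
  "collisions f X = {(u, v). u \<in> X \<and> v \<in> X \<and> u \<noteq> v \<and> f u = f v}"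

lemma card_eq_card_image_plus_excess:
  assumes "finite X"
  shows "card X = card (f ` X) + (\<Sum>y\<in>f ` X. card {x\<in>X. f x = y} - 1)"
proof -
  have fibre_nonempty: "1 \<le> card {x\<in>X. f x = y}" if "y \<in> f ` X" for y
    using that assms by (auto simp: Suc_le_eq card_gt_0_iff)
  have "card X = (\<Sum>y\<in>f ` X. card {x\<in>X. f x = y})"
    using sum.image_gen[OF assms, of "\<lambda>_. 1::nat" f] by simp
  also have "\<dots> = (\<Sum>y\<in>f ` X. 1 + (card {x\<in>X. f x = y} - 1))"
    using fibre_nonempty by (intro sum.cong refl) (metis le_add_diff_inverse)
  also have "\<dots> = card (f ` X) + (\<Sum>y\<in>f ` X. card {x\<in>X. f x = y} - 1)"
    by (simp add: sum_Suc)
  finally show ?thesis .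
qed

lemma card_collisions:
  assumes "finite X"
  shows "card (collisions f X) =
    (\<Sum>y\<in>f ` X. card {x\<in>X. f x = y} * (card {x\<in>X. f x = y} - 1))"
proof -
  have "collisions f X = (SIGMA u:X. {x\<in>X. f x = f u} - {u})"
    by (auto simp: collisions_def)
  then have "card (collisions f X) = (\<Sum>u\<in>X. card {x\<in>X. f x = f u} - 1)"
    using assms by (simp add: card_Diff_singleton)
  also have "\<dots> = (\<Sum>y\<in>f ` X. \<Sum>u\<in>{x\<in>X. f x = y}. card {x\<in>X. f x = f u} - 1)"
    using assms by (rule sum.image_gen)
  also have "\<dots> = (\<Sum>y\<in>f ` X. card {x\<in>X. f x = y} * (card {x\<in>X. f x = y} - 1))"
    by (intro sum.cong refl) auto
  finally show ?thesis .
qed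

lemma card_collisions_ge:
  assumes "finite X"
  shows "2 * card X \<le> card (collisions f X) + 2 * card (f ` X)"
proof -
  have "2 * (c - 1) \<le> c * (c - 1)" for c :: nat
    by (cases "c \<le> 1") auto
  then have "(\<Sum>y\<in>f ` X. 2 * (card {x\<in>X. f x = y} - 1)) \<le> card (collisions f X)"
    unfolding card_collisions[OF assms] by (intro sum_mono)
  then show ?thesis
    using card_eq_card_image_plus_excess[OF assms, of f] by (simp add: sum_distrib_left)
qed

lemma card_collisions_fibres_le_3:
  assumes "finite X" and "\<And>y. card {x\<in>X. f x = y} \<le> 3"
  shows "card (collisions f X) + 2 * card (f ` X)
    = 2 * card X + 2 * card {y \<in> f ` X. card {x\<in>X. f x = y} = 3}"
proof -
  have "c * (c - 1) = 2 * (c - 1) + (if c = 3 then 2 else 0)" if "c \<le> 3" for c :: nat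
  proof -
    have "c = 0 \<or> c = 1 \<or> c = 2 \<or> c = 3"
      using that by arith
    then show ?thesis by auto
  qed
  then have "card (collisions f X)
      = (\<Sum>y\<in>f ` X. 2 * (card {x\<in>X. f x = y} - 1) + (if card {x\<in>X. f x = y} = 3 then 2 else 0))"
    unfolding card_collisions[OF assms(1)] using assms(2) by (intro sum.cong) auto
  also have "\<dots> = 2 * (card X - card (f ` X)) + 2 * card {y \<in> f ` X. card {x\<in>X. f x = y} = 3}"
    using card_eq_card_image_plus_excess[OF assms(1), of f] assms(1)
    by (simp add: sum.distrib sum_distrib_left sum.inter_filter[symmetric])
  finally show ?thesis
    using card_image_le[OF assms(1), of f] by simp
qed

lemma card_triple_fibres_le:
  assumes "finite X"
  shows "2 * card {y \<in> f ` X. card {x\<in>X. f x = y} = 3} + card (f ` X) \<le> card X"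
proof -
  have "2 * card {y \<in> f ` X. card {x\<in>X. f x = y} = 3}
      = (\<Sum>y\<in>f ` X. if card {x\<in>X. f x = y} = 3 then 2 else 0)"
    using assms by (simp add: sum.inter_filter[symmetric])
  also have "\<dots> \<le> (\<Sum>y\<in>f ` X. card {x\<in>X. f x = y} - 1)"
    by (intro sum_mono) auto
  finally show ?thesis
    using card_eq_card_image_plus_excess[OF assms, of f] by simp
qed

definition sum_pairs :: "nat set \<Rightarrow> (nat \<times> nat) set" where
  "sum_pairs A = {(x, y). x \<in> A \<and> y \<in> A \<and> x \<le> y}"

definition diff_pairs :: "nat set \<Rightarrow> (nat \<times> nat) set" where
  "diff_pairs A = {(x, y). x \<in> A \<and> y \<in> A \<and> x < y}"

definition pair_sum :: "nat \<times> nat \<Rightarrow> nat" where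
  "pair_sum = (\<lambda>(x, y). x + y)"

definition pair_diff :: "nat \<times> nat \<Rightarrow> int" where
  "pair_diff = (\<lambda>(x, y). int y - int x)"

definition sum_reprs :: "nat set \<Rightarrow> nat \<Rightarrow> (nat \<times> nat) set" where
  "sum_reprs A v = {p \<in> sum_pairs A. pair_sum p = v}"

definition three_term_aps :: "nat set \<Rightarrow> (nat \<times> nat \<times> nat) set" where
  "three_term_aps A = {(x, y, z). x \<in> A \<and> y \<in> A \<and> z \<in> A \<and> x < y \<and> y < z \<and> x + z = 2 * y}"

lemma pair_sum_conv [simp]: "pair_sum (x, y) = x + y"
  by (simp add: pair_sum_def)

lemma pair_diff_conv [simp]: "pair_diff (x, y) = int y - int x"
  by (simp add: pair_diff_def)

lemma finite_sum_pairs: "finite A \<Longrightarrow> finite (sum_pairs A)"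
  by (rule finite_subset[of _ "A \<times> A"]) (auto simp: sum_pairs_def)

lemma finite_diff_pairs: "finite A \<Longrightarrow> finite (diff_pairs A)"
  by (rule finite_subset[of _ "A \<times> A"]) (auto simp: diff_pairs_def)

lemma finite_sum_reprs: "finite A \<Longrightarrow> finite (sum_reprs A v)"
  by (simp add: sum_reprs_def finite_sum_pairs)

lemma finite_three_term_aps: "finite A \<Longrightarrow> finite (three_term_aps A)"
  by (rule finite_subset[of _ "A \<times> A \<times> A"]) (auto simp: three_term_aps_def)

lemma card_diff_pairs:
  assumes "finite A"
  shows "2 * card (diff_pairs A) + card A = card A * card A"
proof -
  let ?D = "diff_pairs A" and ?Diag = "(\<lambda>x. (x, x)) ` A"
  have "A \<times> A = (?D \<union> prod.swap ` ?D) \<union> ?Diag"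
    by (auto simp: diff_pairs_def image_iff)
  moreover have "(?D \<union> prod.swap ` ?D) \<inter> ?Diag = {}" "?D \<inter> prod.swap ` ?D = {}"
    by (auto simp: diff_pairs_def)
  ultimately have "card (A \<times> A) = card ?D + card (prod.swap ` ?D) + card ?Diag"
    using assms finite_diff_pairs[OF assms] by (simp add: card_Un_disjoint)
  moreover have "card ?Diag = card A"
    by (simp add: card_image inj_on_def)
  ultimately show ?thesis
    by (simp add: card_image card_cartesian_product)
qed

lemma card_sum_pairs:
  assumes "finite A"
  shows "card (sum_pairs A) = card (diff_pairs A) + card A"
proof -
  have "sum_pairs A = diff_pairs A \<union> (\<lambda>x. (x, x)) ` A"
    by (auto simp: sum_pairs_def diff_pairs_def)
  moreover have "diff_pairs A \<inter> (\<lambda>x. (x, x)) ` A = {}"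
    by (auto simp: diff_pairs_def)
  ultimately show ?thesis
    using assms finite_diff_pairs[OF assms] by (simp add: card_Un_disjoint card_image inj_on_def)
qed

lemma sumset_eq_image_sum_pairs: "sumset A = pair_sum ` sum_pairs A"
  unfolding sumset_def sum_pairs_def image_def
  by (auto simp: pair_sum_def) (metis add.commute nat_le_linear)

lemma positive_diffs_eq_image_diff_pairs: "{d \<in> diffset A. d > 0} = pair_diff ` diff_pairs A"
  unfolding diffset_def diff_pairs_def image_def
  by (auto simp: pair_diff_def)

lemma card_diffset:
  assumes "finite A" and "A \<noteq> {}"
  shows "card (diffset A) = 2 * card {d \<in> diffset A. d > 0} + 1"
proof -
  let ?P = "{d \<in> diffset A. d > 0}"
  have "finite ?P"
    using positive_diffs_eq_image_diff_pairs finite_diff_pairs[OF assms(1)] by simp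
  have neg_mem: "- d \<in> diffset A" if "d \<in> diffset A" for d
    using that unfolding diffset_def by force
  have "0 \<in> diffset A"
    using assms(2) unfolding diffset_def by force
  have decomposition: "diffset A = ?P \<union> uminus ` ?P \<union> {0}"
  proof (intro equalityI subsetI)
    fix d assume "d \<in> diffset A"
    then show "d \<in> ?P \<union> uminus ` ?P \<union> {0}"
      using neg_mem[of d] by (cases "d > 0"; cases "d = 0") (auto intro!: image_eqI[of d uminus "- d"])
  qed (use neg_mem \<open>0 \<in> diffset A\<close> in auto)
  have "card (?P \<union> uminus ` ?P) = card ?P + card (uminus ` ?P)"
    using \<open>finite ?P\<close> by (intro card_Un_disjoint) auto
  moreover have "0 \<notin> ?P \<union> uminus ` ?P"
    by auto
  ultimately have "card (?P \<union> uminus ` ?P \<union> {0}) = 2 * card ?P + 1"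
    using \<open>finite ?P\<close> by (simp add: card_image)
  then show ?thesis
    using arg_cong[OF decomposition, of card] by simp
qed

lemma sorted_sum_collision_determines_diff_collision:
  fixes a b c d a' b' c' d' :: nat
  assumes "a < b" "c < d" "b + c = a + d" "a' < b'" "c' < d'" "b' + c' = a' + d'"
    and "min a d = min a' d'" "max a d = max a' d'" "min b c = min b' c'" "max b c = max b' c'"
    and "((a < d) \<noteq> (b < c)) = ((a' < d') \<noteq> (b' < c'))"
  shows "a = a' \<and> b = b' \<and> c = c' \<and> d = d'"
  using assms by (cases "a < d"; cases "b < c"; cases "a' < d'"; cases "b' < c'")
    (simp_all add: min_def max_def split: if_splits)

(* A difference collision b - a = d - c is the sum collision a + d = b + c of the sorted pairs
   {a, d} and {b, c}; the flag picks one of the two difference collisions over each sum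
   collision. A progression (x, y, z) yields the sum collisions ({x, z}, {y, y}) and
   ({y, y}, {x, z}), each with only one preimage, which are therefore missed with the other flag. *)
lemma card_diff_collisions_le:
  assumes "finite A"
  shows "card (collisions pair_diff (diff_pairs A)) + 2 * card (three_term_aps A)
    \<le> 2 * card (collisions pair_sum (sum_pairs A))"
proof -
  let ?D = "collisions pair_diff (diff_pairs A)" and ?S = "collisions pair_sum (sum_pairs A)"
  define sort_pair where "sort_pair x y = (min x y, max x y)" for x y :: nat
  define \<psi> where "\<psi> = (\<lambda>((a, b), (c, d)). ((sort_pair a d, sort_pair b c), (a < d) \<noteq> (b < c)))"
  define missed where "missed =
    (\<lambda>(x, y, z). (((x, z), (y, y)), False)) ` three_term_aps A \<union>
    (\<lambda>(x, y, z). (((y, y), (x, z)), True)) ` three_term_aps A"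
  have "finite ?S"
    by (rule finite_subset[of _ "sum_pairs A \<times> sum_pairs A"])
      (auto simp: collisions_def finite_sum_pairs assms)
  have "inj_on (\<lambda>(x, y, z). (((x, z), (y, y)), False)) X"
    and "inj_on (\<lambda>(x, y, z). (((y, y), (x, z)), True)) X" for X :: "(nat \<times> nat \<times> nat) set"
    by (auto simp: inj_on_def)
  then have card_missed: "card missed = 2 * card (three_term_aps A)"
    unfolding missed_def using finite_three_term_aps[OF assms]
    by (subst card_Un_disjoint) (auto simp: card_image)
  have missed_subset: "missed \<subseteq> ?S \<times> UNIV"
    by (auto simp: missed_def three_term_aps_def collisions_def sum_pairs_def)
  have image_subset: "\<psi> ` ?D \<subseteq> ?S \<times> UNIV - missed"
    by (auto simp: \<psi>_def sort_pair_def missed_def collisions_def diff_pairs_def sum_pairs_def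
        three_term_aps_def min_def max_def split: if_splits)
  have "inj_on \<psi> ?D"
  proof (rule inj_onI)
    fix u v assume "u \<in> ?D" "v \<in> ?D" "\<psi> u = \<psi> v"
    moreover obtain a b c d a' b' c' d' where "u = ((a, b), (c, d))" "v = ((a', b'), (c', d'))"
      by (metis prod.collapse)
    ultimately show "u = v"
      using sorted_sum_collision_determines_diff_collision[of a b c d a' b' c' d']
      by (auto simp: \<psi>_def sort_pair_def collisions_def diff_pairs_def)
  qed
  then have "card ?D \<le> card (?S \<times> (UNIV :: bool set) - missed)"
    using image_subset \<open>finite ?S\<close> by (metis card_image card_mono finite_Diff finite_SigmaI finite_UNIV)
  also have "\<dots> = 2 * card ?S - 2 * card (three_term_aps A)"
    using missed_subset \<open>finite ?S\<close> card_missed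
    by (simp add: card_Diff_subset finite_subset card_cartesian_product)
  finally show ?thesis
    using card_mono[OF _ missed_subset] \<open>finite ?S\<close> card_missed by (simp add: card_cartesian_product)
qed

lemma inj_on_fst_sum_reprs: "inj_on fst (sum_reprs A v)"
  by (rule inj_onI) (auto simp: sum_reprs_def sum_pairs_def)

lemma inj_on_snd_sum_reprs: "inj_on snd (sum_reprs A v)"
  by (rule inj_onI) (auto simp: sum_reprs_def sum_pairs_def)

lemma fst_Un_snd_sum_reprs_subset: "fst ` sum_reprs A v \<union> snd ` sum_reprs A v \<subseteq> A"
  by (auto simp: sum_reprs_def sum_pairs_def)

lemma fst_Int_snd_sum_reprs_subset:
  "fst ` sum_reprs A v \<inter> snd ` sum_reprs A v \<subseteq> {c \<in> A. v = 2 * c}"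
  by (auto simp: sum_reprs_def sum_pairs_def)

lemma two_card_sum_reprs_le:
  assumes "finite A"
  shows "2 * card (sum_reprs A v) \<le> card A + 1"
proof -
  let ?R = "sum_reprs A v"
  have "finite ?R"
    using assms by (rule finite_sum_reprs)
  then have "card (fst ` ?R) + card (snd ` ?R)
      = card (fst ` ?R \<union> snd ` ?R) + card (fst ` ?R \<inter> snd ` ?R)"
    by (intro card_Un_Int) auto
  moreover have "card (fst ` ?R \<union> snd ` ?R) \<le> card A"
    using assms fst_Un_snd_sum_reprs_subset by (rule card_mono)
  moreover have "card (fst ` ?R \<inter> snd ` ?R) \<le> card {v div 2}"
    using fst_Int_snd_sum_reprs_subset[of A v] by (intro card_mono) auto
  ultimately show ?thesis
    by (simp add: card_image inj_on_fst_sum_reprs inj_on_snd_sum_reprs)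
qed

lemma sum_reprs_cover:
  assumes "finite A" and "card A \<le> 2 * card (sum_reprs A v)"
    and "\<forall>c\<in>A. v \<noteq> 2 * c" and "x \<in> A"
  shows "x \<le> v \<and> v - x \<in> A"
proof -
  let ?R = "sum_reprs A v"
  have "finite ?R"
    using assms(1) by (rule finite_sum_reprs)
  have "fst ` ?R \<inter> snd ` ?R = {}"
    using fst_Int_snd_sum_reprs_subset[of A v] assms(3) by blast
  then have "card (fst ` ?R \<union> snd ` ?R) = 2 * card ?R"
    using \<open>finite ?R\<close>
    by (simp add: card_Un_disjoint card_image inj_on_fst_sum_reprs inj_on_snd_sum_reprs)
  then have "fst ` ?R \<union> snd ` ?R = A"
    using assms(1,2) fst_Un_snd_sum_reprs_subset
    by (metis card_mono card_subset_eq le_antisym)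
  then have "x \<in> fst ` ?R \<union> snd ` ?R"
    using assms(4) by simp
  then show ?thesis
    by (auto simp: sum_reprs_def sum_pairs_def)
qed

lemma card_sum_reprs_double_le:
  assumes "finite A" and "c \<in> A"
  shows "card (sum_reprs A (2 * c)) \<le> card (three_term_aps A) + 1"
proof -
  let ?R = "sum_reprs A (2 * c)"
  have "(\<lambda>(x, z). (x, c, z)) ` (?R - {(c, c)}) \<subseteq> three_term_aps A"
    using assms(2) by (auto simp: three_term_aps_def sum_reprs_def sum_pairs_def)
  moreover have "inj_on (\<lambda>(x, z). (x, c, z)) (?R - {(c, c)})"
    by (auto simp: inj_on_def)
  ultimately have "card (?R - {(c, c)}) \<le> card (three_term_aps A)"
    using finite_three_term_aps[OF assms(1)] by (metis card_image card_mono)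
  then show ?thesis
    using assms finite_sum_reprs[OF assms(1)] by (simp add: card_Diff_singleton_if split: if_splits)
qed

lemma two_le_card_three_term_aps_if_symmetric:
  assumes "finite A" and "\<forall>x\<in>A. x \<le> v \<and> v - x \<in> A" and "\<forall>c\<in>A. v \<noteq> 2 * c"
    and "(x, y, z) \<in> three_term_aps A"
  shows "2 \<le> card (three_term_aps A)"
proof -
  have "(v - z, v - y, v - x) \<in> three_term_aps A"
    using assms(2,4) by (auto simp: three_term_aps_def)
  moreover have "v - y \<noteq> y"
    using assms(2-4) by (auto simp: three_term_aps_def)
  ultimately have "card {(x, y, z), (v - z, v - y, v - x)} \<le> card (three_term_aps A)"
    using assms(4) finite_three_term_aps[OF assms(1)] by (intro card_mono) auto
  then show ?thesis
    using \<open>v - y \<noteq> y\<close> by auto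
qed

lemma two_le_card_three_term_aps:
  assumes "finite A" and "card A \<le> 2 * card (sum_reprs A v)" and "3 \<le> card (sum_reprs A v)"
    and "three_term_aps A \<noteq> {}"
  shows "2 \<le> card (three_term_aps A)"
proof (cases "\<exists>c\<in>A. v = 2 * c")
  case True
  then show ?thesis
    using card_sum_reprs_double_le[OF assms(1)] assms(3) by fastforce
next
  case False
  moreover obtain x y z where "(x, y, z) \<in> three_term_aps A"
    using assms(4) by auto
  ultimately show ?thesis
    using two_le_card_three_term_aps_if_symmetric[OF assms(1)] sum_reprs_cover[OF assms(1,2)]
    by blast
qed

lemma card_triple_sums_le:
  assumes "finite A"
  shows "2 * card {v \<in> sumset A. card (sum_reprs A v) = 3} + card (sumset A) \<le> card (sum_pairs A)"
  using card_triple_fibres_le[OF finite_sum_pairs[OF assms], of pair_sum]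
  by (simp add: sumset_eq_image_sum_pairs sum_reprs_def)

lemma card_positive_diffs_lower_bound:
  assumes "finite A" and "\<And>v. card (sum_reprs A v) \<le> 3"
  shows "card (diff_pairs A) + card (three_term_aps A) + 2 * card (sumset A)
    \<le> card {d \<in> diffset A. d > 0} + 2 * card (sum_pairs A)
      + 2 * card {v \<in> sumset A. card (sum_reprs A v) = 3}"
proof -
  have "2 * card (diff_pairs A)
      \<le> card (collisions pair_diff (diff_pairs A)) + 2 * card {d \<in> diffset A. d > 0}"
    using card_collisions_ge[OF finite_diff_pairs[OF assms(1)]] positive_diffs_eq_image_diff_pairs
    by metis
  moreover have "card (collisions pair_diff (diff_pairs A)) + 2 * card (three_term_aps A)
      \<le> 2 * card (collisions pair_sum (sum_pairs A))"
    using assms(1) by (rule card_diff_collisions_le)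
  moreover have "card (collisions pair_sum (sum_pairs A)) + 2 * card (sumset A)
      = 2 * card (sum_pairs A) + 2 * card {v \<in> sumset A. card (sum_reprs A v) = 3}"
    using card_collisions_fibres_le_3[OF finite_sum_pairs[OF assms(1)], of pair_sum] assms(2)
    by (simp add: sumset_eq_image_sum_pairs sum_reprs_def)
  ultimately show ?thesis
    by linarith
qed

lemma three_term_aps_nonempty:
  assumes "m1 \<in> A" "m2 \<in> A" "m3 \<in> A" "m1 \<noteq> m2" "int m2 - int m1 = int m3 - int m2"
  shows "three_term_aps A \<noteq> {}"
proof -
  have "(min m1 m3, m2, max m1 m3) \<in> three_term_aps A"
    using assms by (auto simp: three_term_aps_def min_def max_def)
  then show ?thesis
    by blast
qed

theorem lemma4:
  fixes A :: "nat set"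
  assumes "sum_dominant A"
    and "card A = 6"
    and "\<exists>m1 m2 m3. m1 \<in> A \<and> m2 \<in> A \<and> m3 \<in> A \<and> m1 \<noteq> m2 \<and> m2 \<noteq> m3 \<and> m1 \<noteq> m3
           \<and> int m2 - int m1 = int m3 - int m2"
  shows "card {d \<in> diffset A. d > 0} \<le> 7"
proof (rule ccontr)
  let ?P = "card {d \<in> diffset A. d > 0}" and ?k = "card (three_term_aps A)"
  let ?T = "{v \<in> sumset A. card (sum_reprs A v) = 3}"
  assume "\<not> ?P \<le> 7"
  from assms(1) have fin: "finite A" and "card (diffset A) < card (sumset A)"
    by (simp_all add: sum_dominant_def)
  then have "2 * ?P + 1 < card (sumset A)"
    using card_diffset[OF fin] assms(2) by fastforce
  have aps: "three_term_aps A \<noteq> {}"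
    using assms(3) three_term_aps_nonempty by metis
  then have "1 \<le> ?k"
    using finite_three_term_aps[OF fin] by (auto simp: Suc_le_eq card_gt_0_iff)
  have reprs_le_3: "card (sum_reprs A v) \<le> 3" for v
    using two_card_sum_reprs_le[OF fin, of v] assms(2) by simp
  have pairs: "card (sum_pairs A) = 21" "card (diff_pairs A) = 15"
    using card_diff_pairs[OF fin] card_sum_pairs[OF fin] assms(2) by simp_all
  note counts = card_positive_diffs_lower_bound[OF fin reprs_le_3] card_triple_sums_le[OF fin]
    pairs \<open>1 \<le> ?k\<close> \<open>\<not> ?P \<le> 7\<close> \<open>2 * ?P + 1 < card (sumset A)\<close>
  then have "card ?T \<le> 1" "1 \<le> card ?T"
    by linarith+
  with counts have "?k \<le> 1"
    by linarith
  from \<open>1 \<le> card ?T\<close> have "?T \<noteq> {}"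
    by (auto simp: Suc_le_eq card_gt_0_iff)
  then obtain v where "card (sum_reprs A v) = 3"
    by blast
  then have "2 \<le> ?k"
    using two_le_card_three_term_aps[OF fin _ _ aps, of v] assms(2) by simp
  with \<open>?k \<le> 1\<close> show False
    by simp
qed

end
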